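(* Let $\bar u=(u_\beta)_{\beta<\alpha}$ be a densely non-increasing sequence of elements of a linear order $(U,<)$. If $\bar u$ is not non-increasing, then there exists a greatest ordinal $\alpha'<\alpha$ such that $(u_\beta)_{\beta<\alpha'}$ is non-increasing; moreover $\alpha'$ is a limit ordinal and $\bar u$ is not ultimately constant in $\alpha'$.
   Context: A sequence $(u_\beta)_{\beta<\alpha}$ indexed by a countable ordinal is non-increasing if $\beta<\beta'<\alpha$ implies $u_\beta\ge u_{\beta'}$. It is constant on $[\gamma,\gamma')$ if $u_\beta=u_\gamma$ for all $\gamma\le\beta<\gamma'$. It is densely non-increasing if for all $\gamma<\gamma'\le\alpha$, either it is constant on $[\gamma,\gamma')$ or there exist $\gamma\le\beta<\beta'<\gamma'$ with $u_\beta>u_{\beta'}$. For a limit ordinal $\gamma\le\alpha$, the sequence is ultimately constant in $\gamma$ if there is $\gamma'<\gamma$ such that it is constant on $[\gamma',\gamma)$. *)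

theory Defs
  imports "HOL-Library.Countable_Set"
begin

text \<open>Ordinals are modelled as elements of an arbitrary well-ordered type 'i;
  the ordinals below alpha are the elements below alpha.\<close>

definition non_increasing :: "'i::wellorder \<Rightarrow> ('i \<Rightarrow> 'u::linorder) \<Rightarrow> bool" where
  "non_increasing \<alpha> u \<longleftrightarrow> (\<forall>\<beta> \<beta>'. \<beta> < \<beta>' \<and> \<beta>' < \<alpha> \<longrightarrow> u \<beta> \<ge> u \<beta>')"

definition constant_on :: "('i::wellorder \<Rightarrow> 'u) \<Rightarrow> 'i \<Rightarrow> 'i \<Rightarrow> bool" where
  "constant_on u \<gamma> \<gamma>' \<longleftrightarrow> (\<forall>\<beta>. \<gamma> \<le> \<beta> \<and> \<beta> < \<gamma>' \<longrightarrow> u \<beta> = u \<gamma>)"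

definition densely_non_increasing :: "'i::wellorder \<Rightarrow> ('i \<Rightarrow> 'u::linorder) \<Rightarrow> bool" where
  "densely_non_increasing \<alpha> u \<longleftrightarrow>
     (\<forall>\<gamma> \<gamma>'. \<gamma> < \<gamma>' \<and> \<gamma>' \<le> \<alpha> \<longrightarrow>
        constant_on u \<gamma> \<gamma>' \<or> (\<exists>\<beta> \<beta>'. \<gamma> \<le> \<beta> \<and> \<beta> < \<beta>' \<and> \<beta>' < \<gamma>' \<and> u \<beta> > u \<beta>'))"

definition limit_ord :: "'i::wellorder \<Rightarrow> bool" where
  "limit_ord \<gamma> \<longleftrightarrow> (\<exists>\<beta>. \<beta> < \<gamma>) \<and> (\<forall>\<beta>. \<beta> < \<gamma> \<longrightarrow> (\<exists>\<delta>. \<beta> < \<delta> \<and> \<delta> < \<gamma>))"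

definition ultimately_constant :: "('i::wellorder \<Rightarrow> 'u) \<Rightarrow> 'i \<Rightarrow> bool" where
  "ultimately_constant u \<gamma> \<longleftrightarrow> (\<exists>\<gamma>'. \<gamma>' < \<gamma> \<and> constant_on u \<gamma>' \<gamma>)"

end

theory Submission
  imports Defs
begin

(* Let a be the least index at which u ascends, i.e. u b < u a for some b < a. Below a the
   sequence is non-increasing, and no non-increasing initial segment can reach past a. If u
   were constant on some final segment [g, a), then u g = u (max b g) <= u b < u a, so on the
   interval [g, a] (which is [g, s) for the successor s <= alpha of a) u would be neither
   constant nor anywhere strictly decreasing, contradicting density. A non-ultimately-constant
   point with something below it has no predecessor, hence a is a limit. *)

definition first_ascent :: "('i::wellorder \<Rightarrow> 'u::linorder) \<Rightarrow> 'i" where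
  "first_ascent u = (LEAST a. \<exists>b<a. u b < u a)"

lemma non_increasingD:
  assumes "non_increasing \<alpha> u" and "\<beta> \<le> \<beta>'" and "\<beta>' < \<alpha>"
  shows "u \<beta>' \<le> u \<beta>"
  using assms unfolding non_increasing_def by (cases "\<beta> = \<beta>'") auto

lemma constant_onD:
  assumes "constant_on u \<gamma> \<gamma>'" and "\<gamma> \<le> \<beta>" and "\<beta> < \<gamma>'"
  shows "u \<beta> = u \<gamma>"
  using assms unfolding constant_on_def by blast

lemma non_increasing_first_ascent: "non_increasing (first_ascent u) u"
  unfolding non_increasing_def
proof (intro allI impI)
  fix b a assume "b < a \<and> a < first_ascent u"
  then have "\<not> (\<exists>b'<a. u b' < u a)"
    unfolding first_ascent_def by (blast dest: not_less_Least)
  with \<open>b < a \<and> a < first_ascent u\<close> show "u a \<le> u b" by (auto simp: not_le)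
qed

lemma first_ascent_less:
  assumes "\<not> non_increasing \<alpha> u"
  shows "first_ascent u < \<alpha>" and "\<exists>b < first_ascent u. u b < u (first_ascent u)"
proof -
  from assms obtain b a where "b < a" "a < \<alpha>" "u b < u a"
    unfolding non_increasing_def by (auto simp: not_le)
  then have ascent: "\<exists>b'<a. u b' < u a" by blast
  have "first_ascent u \<le> a"
    unfolding first_ascent_def using ascent by (rule Least_le)
  with \<open>a < \<alpha>\<close> show "first_ascent u < \<alpha>" by simp
  show "\<exists>b < first_ascent u. u b < u (first_ascent u)"
    unfolding first_ascent_def using ascent by (rule LeastI)
qed

lemma non_increasing_le_ascent:
  assumes "non_increasing \<delta> u" and "b < a" and "u b < u a"
  shows "\<delta> \<le> a"
proof (rule ccontr)
  assume "\<not> \<delta> \<le> a"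
  with assms have "u a \<le> u b" unfolding non_increasing_def by simp
  with \<open>u b < u a\<close> show False by simp
qed

lemma ex_successor_le:
  fixes a :: "'i::wellorder"
  assumes "a < \<alpha>"
  obtains s where "s \<le> \<alpha>" and "\<And>x. x < s \<longleftrightarrow> x \<le> a"
proof
  define s where "s = (LEAST x. a < x)"
  show "s \<le> \<alpha>" unfolding s_def using assms by (rule Least_le)
  have "a < s" unfolding s_def using assms by (rule LeastI)
  then show "x < s \<longleftrightarrow> x \<le> a" for x
    using not_less_Least[of x "\<lambda>x. a < x"] unfolding s_def[symmetric] by auto
qed

lemma densely_non_increasing_plateau_ge:
  assumes dense: "densely_non_increasing \<alpha> u"
    and "g < a" and "a < \<alpha>" and plateau: "constant_on u g a"
  shows "u a \<le> u g"
proof (rule ccontr)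
  assume "\<not> u a \<le> u g"
  then have jump: "u g < u a" by simp
  obtain s where "s \<le> \<alpha>" and below_s: "\<And>x. x < s \<longleftrightarrow> x \<le> a"
    using ex_successor_le \<open>a < \<alpha>\<close> by blast
  have "g < s" "a < s" using below_s \<open>g < a\<close> by auto
  have "constant_on u g s \<or> (\<exists>\<beta> \<beta>'. g \<le> \<beta> \<and> \<beta> < \<beta>' \<and> \<beta>' < s \<and> u \<beta> > u \<beta>')"
    using dense \<open>g < s\<close> \<open>s \<le> \<alpha>\<close> unfolding densely_non_increasing_def by simp
  then show False
  proof
    assume "constant_on u g s"
    then have "u a = u g" using \<open>g < a\<close> \<open>a < s\<close> by (auto intro: constant_onD)
    with jump show False by simp
  next
    assume "\<exists>\<beta> \<beta>'. g \<le> \<beta> \<and> \<beta> < \<beta>' \<and> \<beta>' < s \<and> u \<beta> > u \<beta>'"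
    then obtain x y where "g \<le> x" "x < y" "y < s" "u y < u x" by blast
    have "y \<le> a" using below_s \<open>y < s\<close> by blast
    have "u x = u g" using constant_onD[OF plateau \<open>g \<le> x\<close>] \<open>x < y\<close> \<open>y \<le> a\<close> by simp
    moreover have "u g \<le> u y"
    proof (cases "y = a")
      case False
      then have "y < a" using \<open>y \<le> a\<close> by simp
      then show ?thesis using constant_onD[OF plateau _ \<open>y < a\<close>] \<open>g \<le> x\<close> \<open>x < y\<close> by simp
    qed (use jump in simp)
    ultimately show False using \<open>u y < u x\<close> by simp
  qed
qed

lemma not_ultimately_constant_at_ascent:
  assumes dense: "densely_non_increasing \<alpha> u" and "a < \<alpha>" and "non_increasing a u"
    and "b < a" and "u b < u a"
  shows "\<not> ultimately_constant u a"
proof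
  assume "ultimately_constant u a"
  then obtain g where "g < a" and plateau: "constant_on u g a"
    unfolding ultimately_constant_def by blast
  define e where "e = max b g"
  have "e < a" "b \<le> e" "g \<le> e" using \<open>b < a\<close> \<open>g < a\<close> by (auto simp: e_def)
  have "u a \<le> u g" using densely_non_increasing_plateau_ge[OF dense \<open>g < a\<close> \<open>a < \<alpha>\<close> plateau] .
  also have "u g = u e" using constant_onD[OF plateau \<open>g \<le> e\<close> \<open>e < a\<close>] by simp
  also have "u e \<le> u b" using non_increasingD[OF \<open>non_increasing a u\<close> \<open>b \<le> e\<close> \<open>e < a\<close>] .
  finally show False using \<open>u b < u a\<close> by simp
qed

lemma limit_ord_if_not_ultimately_constant:
  assumes "\<beta> < \<gamma>" and "\<not> ultimately_constant u \<gamma>"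
  shows "limit_ord \<gamma>"
  unfolding limit_ord_def
proof (intro conjI allI impI)
  show "\<exists>\<beta>. \<beta> < \<gamma>" using assms(1) by blast
next
  fix x assume "x < \<gamma>"
  show "\<exists>\<delta>. x < \<delta> \<and> \<delta> < \<gamma>"
  proof (rule ccontr)
    assume "\<not> (\<exists>\<delta>. x < \<delta> \<and> \<delta> < \<gamma>)"
    then have "constant_on u x \<gamma>" unfolding constant_on_def by (auto simp: le_less)
    with \<open>x < \<gamma>\<close> assms(2) show False unfolding ultimately_constant_def by blast
  qed
qed

theorem mainTheorem12:
  fixes \<alpha> :: "'i::wellorder" and u :: "'i \<Rightarrow> 'u::linorder"
  assumes "countable {..<\<alpha>}"
    and "densely_non_increasing \<alpha> u"
    and "\<not> non_increasing \<alpha> u"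
  shows "\<exists>\<alpha>'. \<alpha>' < \<alpha> \<and> non_increasing \<alpha>' u
            \<and> (\<forall>\<delta>. \<delta> < \<alpha> \<and> non_increasing \<delta> u \<longrightarrow> \<delta> \<le> \<alpha>')
            \<and> limit_ord \<alpha>' \<and> \<not> ultimately_constant u \<alpha>'"
proof (intro exI conjI allI impI)
  let ?a = "first_ascent u"
  show "?a < \<alpha>" using first_ascent_less(1)[OF assms(3)] .
  obtain b where "b < ?a" "u b < u ?a" using first_ascent_less(2)[OF assms(3)] by blast
  show "non_increasing ?a u" by (rule non_increasing_first_ascent)
  show "\<delta> \<le> ?a" if "\<delta> < \<alpha> \<and> non_increasing \<delta> u" for \<delta>
    using non_increasing_le_ascent that \<open>b < ?a\<close> \<open>u b < u ?a\<close> by blast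
  show not_const: "\<not> ultimately_constant u ?a"
    using not_ultimately_constant_at_ascent assms(2) \<open>?a < \<alpha>\<close> non_increasing_first_ascent
      \<open>b < ?a\<close> \<open>u b < u ?a\<close> by blast
  show "limit_ord ?a"
    using limit_ord_if_not_ultimately_constant[OF \<open>b < ?a\<close> not_const] .
qed

end
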